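(* Let $\varphi\in\Phi_w(\Omega)$, let $r>1$ and $u_0\in L^{1,\varphi^r}(\Omega)$. Let $u\in L^1(\Omega)$, let $u_i\to u$ in $L^1(\Omega)$ and let $p_i\in(1,r)$ with $p_i\to1^+$. Then $E(u)\le\liminf_{i\to\infty}E_{p_i}(u_i)$.
   Context: $\Omega\subset\mathbb{R}^n$ is a bounded domain. A function $g$ on $(0,\infty)$ is $L$-almost increasing ($L\ge1$) if $g(s)\le Lg(t)$ whenever $0<s\le t$. A weak $\Phi$-function, $\varphi\in\Phi_w(\Omega)$, is $\varphi:\Omega\times[0,\infty)\to[0,\infty]$ such that for a.e. $x\in\Omega$: for every measurable $h:\Omega\to\mathbb{R}$, $y\mapsto\varphi(y,h(y))$ is measurable; $t\mapsto\varphi(x,t)$ is non-decreasing; $\varphi(x,0)=\lim_{t\to0^+}\varphi(x,t)=0$, $\lim_{t\to\infty}\varphi(x,t)=\infty$; $t\mapsto\varphi(x,t)/t$ is $L$-almost increasing on $(0,\infty)$ with $L$ independent of $x$. $\varphi^p(x,t):=\varphi(x,t)^p$. $\varrho_\varphi(u)=\int_\Omega\varphi(x,|u|)\,dx$; $\|u\|_\varphi=\inf\{\lambda>0:\varrho_\varphi(u/\lambda)\le1\}$, $\|v\|_\varphi=\||v|\|_\varphi$ for vector fields. $L^{1,\varphi}(\Omega)=\{u\in W^{1,1}(\Omega):\|u\|_{L^{1,\varphi}(\Omega)}<\infty\}$, $\|u\|_{L^{1,\varphi}(\Omega)}=\|u\|_{L^1(\Omega)}+\|\nabla u\|_\varphi$.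 $L^{1,\varphi}_0(\Omega)$ is the set of $u\in L^{1,\varphi}(\Omega)$ which are limits in $L^{1,\varphi}(\Omega)$ of sequences in $C_0^\infty(\Omega)$. For $p\in(1,r)$, $E_p:L^1(\Omega)\to[0,\infty]$, $E_p(u)=\int_\Omega\varphi(x,|\nabla u|)^p\,dx$ if $u-u_0\in L^{1,\varphi^p}_0(\Omega)$ and $E_p(u)=+\infty$ otherwise; $E(u)=\inf\{\liminf_{i\to\infty}\int_\Omega\varphi(x,|\nabla v_i|)\,dx: v_i-u_0\in L^{1,\varphi}_0(\Omega),\ v_i\to u\text{ in }L^1(\Omega)\}$. *)

theory Defs
  imports "HOL-Analysis.Analysis"
begin

fun Ck :: "nat \<Rightarrow> (real^'n \<Rightarrow> real) \<Rightarrow> bool" where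
  "Ck 0 f = continuous_on UNIV f"
| "Ck (Suc k) f = (continuous_on UNIV f \<and> (\<forall>x. f differentiable (at x)) \<and>
      (\<forall>i. Ck k (\<lambda>x. frechet_derivative f (at x) (axis i 1))))"

definition smooth_fun :: "(real^'n \<Rightarrow> real) \<Rightarrow> bool" where
  "smooth_fun f \<longleftrightarrow> (\<forall>k. Ck k f)"

definition test_fn :: "(real^'n) set \<Rightarrow> (real^'n \<Rightarrow> real) \<Rightarrow> bool" where
  "test_fn \<Omega> f \<longleftrightarrow> smooth_fun f \<and> compact (closure {x. f x \<noteq> 0}) \<and> closure {x. f x \<noteq> 0} \<subseteq> \<Omega>"

definition weak_grad :: "(real^'n) set \<Rightarrow> (real^'n \<Rightarrow> real) \<Rightarrow> (real^'n \<Rightarrow> real^'n) \<Rightarrow> bool" where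
  "weak_grad \<Omega> u G \<longleftrightarrow>
     (\<forall>j. integrable (lebesgue_on \<Omega>) (\<lambda>x. G x $ j)) \<and>
     (\<forall>\<psi>. test_fn \<Omega> \<psi> \<longrightarrow> (\<forall>j.
        (LINT x|lebesgue_on \<Omega>. u x * frechet_derivative \<psi> (at x) (axis j 1))
          = - (LINT x|lebesgue_on \<Omega>. G x $ j * \<psi> x)))"

definition W11 :: "(real^'n) set \<Rightarrow> (real^'n \<Rightarrow> real) \<Rightarrow> bool" where
  "W11 \<Omega> u \<longleftrightarrow> integrable (lebesgue_on \<Omega>) u \<and> (\<exists>G. weak_grad \<Omega> u G)"

definition grad :: "(real^'n) set \<Rightarrow> (real^'n \<Rightarrow> real) \<Rightarrow> (real^'n \<Rightarrow> real^'n)" where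
  "grad \<Omega> u = (SOME G. weak_grad \<Omega> u G)"

definition Phi_w :: "(real^'n) set \<Rightarrow> (real^'n \<Rightarrow> real \<Rightarrow> ennreal) \<Rightarrow> bool" where
  "Phi_w \<Omega> \<phi> \<longleftrightarrow>
     (\<forall>h. h \<in> borel_measurable (lebesgue_on \<Omega>) \<and> (\<forall>x. 0 \<le> h x) \<longrightarrow>
          (\<lambda>y. \<phi> y (h y)) \<in> borel_measurable (lebesgue_on \<Omega>)) \<and>
     (\<exists>L\<ge>1. AE x in lebesgue_on \<Omega>.
          mono_on {0..} (\<phi> x) \<and> \<phi> x 0 = 0 \<and> ((\<phi> x) \<longlongrightarrow> 0) (at_right 0) \<and>
          ((\<phi> x) \<longlongrightarrow> top) at_top \<and>
          (\<forall>s t. 0 < s \<and> s \<le> t \<longrightarrow> \<phi> x s / ennreal s \<le> ennreal L * (\<phi> x t / ennreal t)))"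

definition ennpow :: "ennreal \<Rightarrow> real \<Rightarrow> ennreal" where
  "ennpow a p = (if a = top then top else ennreal (enn2real a powr p))"

definition phi_pow :: "(real^'n \<Rightarrow> real \<Rightarrow> ennreal) \<Rightarrow> real \<Rightarrow> (real^'n \<Rightarrow> real \<Rightarrow> ennreal)" where
  "phi_pow \<phi> p = (\<lambda>x t. ennpow (\<phi> x t) p)"

definition modular :: "(real^'n) set \<Rightarrow> (real^'n \<Rightarrow> real \<Rightarrow> ennreal) \<Rightarrow> (real^'n \<Rightarrow> real) \<Rightarrow> ennreal" where
  "modular \<Omega> \<phi> f = (\<integral>\<^sup>+ x\<in>\<Omega>. \<phi> x \<bar>f x\<bar> \<partial>lebesgue)"

definition lux_norm :: "(real^'n) set \<Rightarrow> (real^'n \<Rightarrow> real \<Rightarrow> ennreal) \<Rightarrow> (real^'n \<Rightarrow> real) \<Rightarrow> ennreal" where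
  "lux_norm \<Omega> \<phi> f = Inf {ennreal lam | lam. lam > 0 \<and> modular \<Omega> \<phi> (\<lambda>x. f x / lam) \<le> 1}"

definition L1_norm :: "(real^'n) set \<Rightarrow> (real^'n \<Rightarrow> real) \<Rightarrow> ennreal" where
  "L1_norm \<Omega> u = (\<integral>\<^sup>+ x\<in>\<Omega>. ennreal \<bar>u x\<bar> \<partial>lebesgue)"

definition L1phi_norm :: "(real^'n) set \<Rightarrow> (real^'n \<Rightarrow> real \<Rightarrow> ennreal) \<Rightarrow> (real^'n \<Rightarrow> real) \<Rightarrow> ennreal" where
  "L1phi_norm \<Omega> \<phi> u = L1_norm \<Omega> u + lux_norm \<Omega> \<phi> (\<lambda>x. norm (grad \<Omega> u x))"

definition L1phi :: "(real^'n) set \<Rightarrow> (real^'n \<Rightarrow> real \<Rightarrow> ennreal) \<Rightarrow> (real^'n \<Rightarrow> real) \<Rightarrow> bool" where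
  "L1phi \<Omega> \<phi> u \<longleftrightarrow> W11 \<Omega> u \<and> L1phi_norm \<Omega> \<phi> u < top"

definition L1phi0 :: "(real^'n) set \<Rightarrow> (real^'n \<Rightarrow> real \<Rightarrow> ennreal) \<Rightarrow> (real^'n \<Rightarrow> real) \<Rightarrow> bool" where
  "L1phi0 \<Omega> \<phi> u \<longleftrightarrow> L1phi \<Omega> \<phi> u \<and>
     (\<exists>v. (\<forall>k. test_fn \<Omega> (v k)) \<and> (\<lambda>k. L1phi_norm \<Omega> \<phi> (\<lambda>x. u x - v k x)) \<longlonglongrightarrow> 0)"

definition L1_conv :: "(real^'n) set \<Rightarrow> (nat \<Rightarrow> real^'n \<Rightarrow> real) \<Rightarrow> (real^'n \<Rightarrow> real) \<Rightarrow> bool" where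
  "L1_conv \<Omega> v u \<longleftrightarrow> (\<forall>i. integrable (lebesgue_on \<Omega>) (v i)) \<and> integrable (lebesgue_on \<Omega>) u \<and>
     (\<lambda>i. L1_norm \<Omega> (\<lambda>x. v i x - u x)) \<longlonglongrightarrow> 0"

definition E_p :: "(real^'n) set \<Rightarrow> (real^'n \<Rightarrow> real \<Rightarrow> ennreal) \<Rightarrow> (real^'n \<Rightarrow> real) \<Rightarrow> real
                    \<Rightarrow> (real^'n \<Rightarrow> real) \<Rightarrow> ennreal" where
  "E_p \<Omega> \<phi> u0 p u =
     (if L1phi0 \<Omega> (phi_pow \<phi> p) (\<lambda>x. u x - u0 x)
      then (\<integral>\<^sup>+ x\<in>\<Omega>. ennpow (\<phi> x (norm (grad \<Omega> u x))) p \<partial>lebesgue)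
      else top)"

definition E_1 :: "(real^'n) set \<Rightarrow> (real^'n \<Rightarrow> real \<Rightarrow> ennreal) \<Rightarrow> (real^'n \<Rightarrow> real)
                    \<Rightarrow> (real^'n \<Rightarrow> real) \<Rightarrow> ennreal" where
  "E_1 \<Omega> \<phi> u0 u = Inf {liminf (\<lambda>i. \<integral>\<^sup>+ x\<in>\<Omega>. \<phi> x (norm (grad \<Omega> (v i) x)) \<partial>lebesgue) | v.
        (\<forall>i. L1phi0 \<Omega> \<phi> (\<lambda>x. v i x - u0 x)) \<and> L1_conv \<Omega> v u}"

end

theory Submission
  imports Defs
begin

text \<open>On a set of finite measure the \<open>\<phi>\<^sup>p\<close>-norm controls the \<open>\<phi>\<close>-norm: since
  \<open>\<phi> \<le> 1 + \<phi>\<^sup>p\<close> and \<open>\<phi>(t)/t\<close> is almost increasing, a unit \<open>\<phi>\<^sup>p\<close>-ball scaled by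
  \<open>L (|\<Omega>| + 1)\<close> lies in the unit \<open>\<phi>\<close>-ball. Hence, along a subsequence on which \<open>E\<^sub>p\<^sub>i(u\<^sub>i)\<close> is finite,
  the \<open>u\<^sub>i\<close> are admissible competitors in the definition of \<open>E(u)\<close>. The energies are compared by Young's inequality
  \<open>\<phi> \<le> \<delta> + \<delta>\<^bsup>1-p\<^esup> \<phi>\<^sup>p\<close>, whose coefficient tends to 1 as \<open>p \<rightarrow> 1\<close>; choosing the
  subsequence to realise the \<open>liminf\<close> of \<open>E\<^sub>p\<^sub>i(u\<^sub>i)\<close>, this gives \<open>E(u) \<le> \<delta> |\<Omega>| + liminf E\<^sub>p\<^sub>i(u\<^sub>i)\<close> for every \<open>\<delta> > 0\<close>.\<close>

lemma nn_integral_cmult_le: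
  fixes c :: ennreal
  assumes "c < top"
  shows "(\<integral>\<^sup>+x. c * f x \<partial>M) \<le> c * integral\<^sup>N M f"
proof (cases "c = 0")
  case True then show ?thesis by simp
next
  case False
  show ?thesis
    unfolding nn_integral_def
  proof (rule SUP_least)
    fix g assume g: "g \<in> {g. simple_function M g \<and> g \<le> (\<lambda>x. c * f x)}"
    define g' where "g' x = g x / c" for x
    have simple_g': "simple_function M g'"
      using g unfolding g'_def by (auto intro: simple_function_compose1[where g="\<lambda>y. y / c"])
    have g_eq: "g x = c * g' x" for x
      using False assms unfolding g'_def
      by (metis ennreal_mult_divide_eq ennreal_times_divide less_top mult.commute)
    have "g' \<le> f"
      using g False by (auto simp: le_fun_def g'_def zero_less_iff_neq_zero intro: divide_le_posI_ennreal)
    have "integral\<^sup>S M g = integral\<^sup>S M (\<lambda>x. c * g' x)"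
      by (simp add: g_eq[abs_def])
    also have "\<dots> = c * integral\<^sup>S M g'"
      using simple_g' by simp
    also have "integral\<^sup>S M g' \<le> (SUP g \<in> {g. simple_function M g \<and> g \<le> f}. integral\<^sup>S M g)"
      using simple_g' \<open>g' \<le> f\<close> by (intro SUP_upper) auto
    finally show "integral\<^sup>S M g \<le> c * (SUP g \<in> {g. simple_function M g \<and> g \<le> f}. integral\<^sup>S M g)"
      by (simp add: mult_left_mono)
  qed
qed

lemma nn_integral_add_simple_le:
  fixes g h :: "'a \<Rightarrow> ennreal"
  assumes simple_g: "simple_function M g" and finite_g: "\<And>x. g x < top"
  shows "(\<integral>\<^sup>+x. g x + h x \<partial>M) \<le> integral\<^sup>N M g + integral\<^sup>N M h"
  unfolding nn_integral_def[of M "\<lambda>x. g x + h x"]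
proof (rule SUP_least)
  fix s assume s: "s \<in> {s. simple_function M s \<and> s \<le> (\<lambda>x. g x + h x)}"
  define s' where "s' x = s x - g x" for x
  have simple_s': "simple_function M s'"
    using s simple_g unfolding s'_def by (auto intro: simple_function_compose2)
  have "s x \<le> g x + s' x" for x
    unfolding s'_def by (metis add.commute diff_add_cancel_ennreal le_iff_add linorder_le_cases
        ennreal_minus_eq_0 add_0 order.refl add_increasing2 zero_le)
  moreover have "s' x \<le> h x" for x
    using s finite_g[of x] unfolding s'_def le_fun_def by (auto simp: ennreal_minus_le_iff add.commute)
  ultimately have "integral\<^sup>S M s \<le> integral\<^sup>S M (\<lambda>x. g x + s' x)" and "integral\<^sup>N M s' \<le> integral\<^sup>N M h"
    using s simple_s' simple_g by (auto simp del: simple_integral_add intro: simple_integral_mono nn_integral_mono)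
  moreover have "integral\<^sup>S M (\<lambda>x. g x + s' x) = integral\<^sup>N M g + integral\<^sup>N M s'"
    using simple_s' simple_g by (simp add: nn_integral_eq_simple_integral)
  ultimately show "integral\<^sup>S M s \<le> integral\<^sup>N M g + integral\<^sup>N M h"
    by (metis add_left_mono order_trans)
qed

text \<open>Neither lemma asks for measurability of the integrand: the integrands below involve
  a weak gradient chosen by Hilbert choice, whose measurability is never established.\<close>

lemma nn_integral_cmult_indicator_add_le:
  fixes c e :: ennreal
  assumes "A \<in> sets M" "c < top" "e < top"
  shows "(\<integral>\<^sup>+x. c * indicator A x + e * f x \<partial>M) \<le> c * emeasure M A + e * integral\<^sup>N M f"
proof -
  have "(\<integral>\<^sup>+x. c * indicator A x + e * f x \<partial>M) \<le> (\<integral>\<^sup>+x. c * indicator A x \<partial>M) + (\<integral>\<^sup>+x. e * f x \<partial>M)"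
    using assms by (intro nn_integral_add_simple_le simple_function_mult simple_function_indicator)
      (auto simp: indicator_def)
  also have "\<dots> \<le> c * emeasure M A + e * integral\<^sup>N M f"
    using assms by (simp only: nn_integral_cmult_indicator) (intro add_left_mono nn_integral_cmult_le)
  finally show ?thesis .
qed

lemma almost_increasing_scale_le:
  fixes F :: "real \<Rightarrow> ennreal"
  assumes F0: "F 0 = 0"
    and almost_inc: "\<forall>s t. 0 < s \<and> s \<le> t \<longrightarrow> F s / ennreal s \<le> ennreal L * (F t / ennreal t)"
    and "t \<ge> 0" "K \<ge> 1" "L \<ge> 0"
  shows "F (t / K) \<le> ennreal (L / K) * F t"
proof (cases "t = 0")
  case True then show ?thesis using F0 by simp
next
  case False
  define s where "s = t / K"
  have "t > 0" "s > 0" "s \<le> t"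
    using False assms(3,4) unfolding s_def by (auto simp: divide_le_eq)
  have "F s = F s / ennreal s * ennreal s"
    using \<open>s > 0\<close> by (simp add: ennreal_divide_times)
  also have "\<dots> \<le> ennreal L * (F t / ennreal t) * ennreal s"
    using almost_inc \<open>s > 0\<close> \<open>s \<le> t\<close> by (intro mult_right_mono) auto
  also have "\<dots> = ennreal L * (ennreal s / ennreal t) * F t"
    by (simp add: divide_ennreal_def mult_ac)
  also have "ennreal L * (ennreal s / ennreal t) = ennreal (L / K)"
    using \<open>t > 0\<close> assms(4,5) unfolding s_def by (simp add: divide_ennreal ennreal_mult[symmetric])
  finally show ?thesis unfolding s_def .
qed

lemma le_add_powr:
  fixes x d p :: real
  assumes "x \<ge> 0" "d > 0" "p \<ge> 1"
  shows "x \<le> d + d powr (1 - p) * x powr p"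
proof (cases "x \<le> d")
  case True
  then show ?thesis using assms by (simp add: add_increasing2)
next
  case False
  have "d powr (1 - p) * x powr p = x * (x / d) powr (p - 1)"
    using False assms by (simp add: powr_diff powr_divide powr_minus_divide field_simps)
  also have "\<dots> \<ge> x * 1"
    using False assms by (intro mult_left_mono ge_one_powr_ge_zero) auto
  finally show ?thesis using assms by simp
qed

lemma le_add_ennpow:
  assumes "d > 0" "p \<ge> 1"
  shows "a \<le> ennreal d + ennreal (d powr (1 - p)) * ennpow a p"
proof (cases a)
  case (real x)
  then have "ennreal x \<le> ennreal (d + d powr (1 - p) * x powr p)"
    using le_add_powr[OF _ assms] by (intro ennreal_leI) simp
  then show ?thesis
    using real assms by (simp add: ennpow_def ennreal_plus ennreal_mult)
next
  case top
  then show ?thesis using assms by (simp add: ennpow_def ennreal_mult_top)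
qed

locale phi_pow_embedding =
  fixes \<Omega> :: "(real^'n) set" and \<phi> :: "real^'n \<Rightarrow> real \<Rightarrow> ennreal" and m L :: real
  assumes sets_\<Omega>: "\<Omega> \<in> sets lebesgue" and emeasure_\<Omega>: "emeasure lebesgue \<Omega> = ennreal m"
    and m_nonneg: "m \<ge> 0" and L_ge_1: "L \<ge> 1"
    and almost_inc_AE: "AE x in lebesgue. x \<in> \<Omega> \<longrightarrow> \<phi> x 0 = 0 \<and>
       (\<forall>s t. 0 < s \<and> s \<le> t \<longrightarrow> \<phi> x s / ennreal s \<le> ennreal L * (\<phi> x t / ennreal t))"
begin

definition K :: real where "K = L * (m + 1)"

lemma K_ge_1: "K \<ge> 1"
  using L_ge_1 m_nonneg mult_mono[of 1 L 1 "m + 1"] unfolding K_def by simp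

lemma modular_le_1_if_phi_pow:
  assumes "p \<ge> 1" "lam > 0" and modular_p: "modular \<Omega> (phi_pow \<phi> p) (\<lambda>x. g x / lam) \<le> 1"
  shows "modular \<Omega> \<phi> (\<lambda>x. g x / (K * lam)) \<le> 1"
proof -
  define c where "c = ennreal (L / K)"
  have "AE x in lebesgue. \<phi> x \<bar>g x / (K * lam)\<bar> * indicator \<Omega> x \<le>
      c * indicator \<Omega> x + c * (phi_pow \<phi> p x \<bar>g x / lam\<bar> * indicator \<Omega> x)"
    using almost_inc_AE
  proof (rule eventually_mono, cases)
    fix x assume x: "x \<in> \<Omega>" and "x \<in> \<Omega> \<longrightarrow> \<phi> x 0 = 0 \<and>
       (\<forall>s t. 0 < s \<and> s \<le> t \<longrightarrow> \<phi> x s / ennreal s \<le> ennreal L * (\<phi> x t / ennreal t))"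
    then have "\<phi> x (\<bar>g x / lam\<bar> / K) \<le> c * \<phi> x \<bar>g x / lam\<bar>"
      unfolding c_def using K_ge_1 L_ge_1 by (intro almost_increasing_scale_le) auto
    also have "\<phi> x \<bar>g x / lam\<bar> \<le> 1 + ennpow (\<phi> x \<bar>g x / lam\<bar>) p"
      using le_add_ennpow[of 1 p] \<open>p \<ge> 1\<close> by simp
    finally have "\<phi> x (\<bar>g x / lam\<bar> / K) \<le> c * (1 + ennpow (\<phi> x \<bar>g x / lam\<bar>) p)"
      by (simp add: mult_left_mono)
    then show "\<phi> x \<bar>g x / (K * lam)\<bar> * indicator \<Omega> x \<le>
      c * indicator \<Omega> x + c * (phi_pow \<phi> p x \<bar>g x / lam\<bar> * indicator \<Omega> x)"
      using x \<open>lam > 0\<close> K_ge_1 by (simp add: phi_pow_def abs_divide distrib_left mult.commute)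
  qed auto
  then have "modular \<Omega> \<phi> (\<lambda>x. g x / (K * lam)) \<le>
      c * emeasure lebesgue \<Omega> + c * modular \<Omega> (phi_pow \<phi> p) (\<lambda>x. g x / lam)"
    unfolding modular_def
    by (intro order_trans[OF nn_integral_mono_AE nn_integral_cmult_indicator_add_le])
      (auto simp: c_def sets_\<Omega>)
  also have "\<dots> \<le> c * ennreal (m + 1)"
    using modular_p m_nonneg
    by (simp add: emeasure_\<Omega> distrib_left[symmetric] ennreal_plus[symmetric] mult_left_mono add_left_mono)
  also have "\<dots> = 1"
    using K_ge_1 m_nonneg L_ge_1 unfolding c_def K_def
    by (simp add: ennreal_mult[symmetric] ennreal_plus[symmetric] del: ennreal_plus)
  finally show ?thesis .
qed

lemma lux_norm_le_phi_pow:
  assumes "p \<ge> 1"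
  shows "lux_norm \<Omega> \<phi> g \<le> ennreal K * lux_norm \<Omega> (phi_pow \<phi> p) g"
proof -
  have K_pos: "K > 0" using K_ge_1 by simp
  have "lux_norm \<Omega> \<phi> g / ennreal K \<le> lux_norm \<Omega> (phi_pow \<phi> p) g"
    unfolding lux_norm_def[of _ "phi_pow \<phi> p"]
  proof (rule Inf_greatest, clarify)
    fix lam assume "lam > 0" "modular \<Omega> (phi_pow \<phi> p) (\<lambda>x. g x / lam) \<le> 1"
    then have "lux_norm \<Omega> \<phi> g \<le> ennreal (K * lam)"
      unfolding lux_norm_def using modular_le_1_if_phi_pow[OF assms] K_pos
      by (intro Inf_lower) auto
    then show "lux_norm \<Omega> \<phi> g / ennreal K \<le> ennreal lam"
      using K_pos \<open>lam > 0\<close> by (intro divide_le_posI_ennreal) (auto simp: ennreal_mult)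
  qed
  then have "lux_norm \<Omega> \<phi> g / ennreal K * ennreal K \<le> lux_norm \<Omega> (phi_pow \<phi> p) g * ennreal K"
    by (rule mult_right_mono) simp
  moreover have "lux_norm \<Omega> \<phi> g / ennreal K * ennreal K = lux_norm \<Omega> \<phi> g"
    using K_pos by (simp add: ennreal_divide_times)
  ultimately show ?thesis
    by (simp add: mult.commute)
qed

lemma L1phi_norm_le_phi_pow:
  assumes "p \<ge> 1"
  shows "L1phi_norm \<Omega> \<phi> u \<le> ennreal K * L1phi_norm \<Omega> (phi_pow \<phi> p) u"
proof -
  have "L1_norm \<Omega> u \<le> ennreal K * L1_norm \<Omega> u"
    using K_ge_1 mult_right_mono[of 1 "ennreal K" "L1_norm \<Omega> u"] by simp
  then show ?thesis
    unfolding L1phi_norm_def using lux_norm_le_phi_pow[OF assms]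
    by (simp add: distrib_left add_mono)
qed

lemma L1phi0_if_phi_pow:
  assumes "p \<ge> 1" "L1phi0 \<Omega> (phi_pow \<phi> p) w"
  shows "L1phi0 \<Omega> \<phi> w"
proof -
  from assms(2) obtain v where w: "W11 \<Omega> w" "L1phi_norm \<Omega> (phi_pow \<phi> p) w < top"
    and v: "\<forall>k. test_fn \<Omega> (v k)" "(\<lambda>k. L1phi_norm \<Omega> (phi_pow \<phi> p) (\<lambda>x. w x - v k x)) \<longlonglongrightarrow> 0"
    unfolding L1phi0_def L1phi_def by auto
  have "L1phi_norm \<Omega> \<phi> w < top"
    using L1phi_norm_le_phi_pow[OF assms(1), of w] w(2)
    by (auto simp: ennreal_mult_less_top intro: le_less_trans)
  moreover have "(\<lambda>k. L1phi_norm \<Omega> \<phi> (\<lambda>x. w x - v k x)) \<longlonglongrightarrow> 0"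
  proof (rule tendsto_sandwich[OF _ _ tendsto_const])
    show "(\<lambda>k. ennreal K * L1phi_norm \<Omega> (phi_pow \<phi> p) (\<lambda>x. w x - v k x)) \<longlonglongrightarrow> 0"
      using tendsto_mult_ennreal[OF tendsto_const v(2), of "ennreal K"] by simp
  qed (use L1phi_norm_le_phi_pow[OF assms(1)] in auto)
  ultimately show ?thesis
    using w(1) v(1) unfolding L1phi0_def L1phi_def by blast
qed

end

lemma set_nn_integral_le_add_ennpow:
  assumes "A \<in> sets M" "emeasure M A = ennreal m" "d > 0" "q \<ge> 1"
  shows "(\<integral>\<^sup>+x\<in>A. f x \<partial>M) \<le> ennreal d * ennreal m + ennreal (d powr (1 - q)) * (\<integral>\<^sup>+x\<in>A. ennpow (f x) q \<partial>M)"
proof -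
  have "(\<integral>\<^sup>+x\<in>A. f x \<partial>M) \<le>
      (\<integral>\<^sup>+x. ennreal d * indicator A x + ennreal (d powr (1 - q)) * (ennpow (f x) q * indicator A x) \<partial>M)"
    using le_add_ennpow[OF assms(3,4)] by (intro nn_integral_mono) (simp add: indicator_def)
  also have "\<dots> \<le> ennreal d * ennreal m + ennreal (d powr (1 - q)) * (\<integral>\<^sup>+x\<in>A. ennpow (f x) q \<partial>M)"
    using assms(1,2) nn_integral_cmult_indicator_add_le[of A M "ennreal d" "ennreal (d powr (1 - q))"]
    by (simp add: mult.assoc)
  finally show ?thesis .
qed

lemma liminf_le_if_le_add_powr:
  fixes F E :: "nat \<Rightarrow> ennreal" and q :: "nat \<Rightarrow> real"
  assumes bound: "\<And>d j. d > 0 \<Longrightarrow> F j \<le> ennreal d * ennreal m + ennreal (d powr (1 - q j)) * E j"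
    and "m \<ge> 0" "E \<longlonglongrightarrow> A" "q \<longlonglongrightarrow> 1"
  shows "liminf F \<le> A"
proof (rule ennreal_le_epsilon)
  fix e :: real assume "e > 0"
  define d where "d = e / (m + 1)"
  have "d > 0" "d * m \<le> e"
    using \<open>e > 0\<close> \<open>m \<ge> 0\<close> unfolding d_def by (auto simp: field_simps)
  have "(\<lambda>j. d powr (1 - q j)) \<longlonglongrightarrow> d powr (1 - 1)"
    using \<open>d > 0\<close> \<open>q \<longlonglongrightarrow> 1\<close> by (intro tendsto_intros) auto
  then have "(\<lambda>j. ennreal (d powr (1 - q j))) \<longlonglongrightarrow> ennreal 1"
    using \<open>d > 0\<close> by (intro tendsto_ennrealI) simp
  then have "(\<lambda>j. ennreal d * ennreal m + ennreal (d powr (1 - q j)) * E j) \<longlonglongrightarrow>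
      ennreal d * ennreal m + ennreal 1 * A"
    by (intro tendsto_add tendsto_const tendsto_mult_ennreal \<open>E \<longlonglongrightarrow> A\<close>) auto
  then have "liminf (\<lambda>j. ennreal d * ennreal m + ennreal (d powr (1 - q j)) * E j) = ennreal d * ennreal m + A"
    by (simp add: lim_imp_Liminf)
  moreover have "liminf F \<le> liminf (\<lambda>j. ennreal d * ennreal m + ennreal (d powr (1 - q j)) * E j)"
    using bound[OF \<open>d > 0\<close>] by (intro Liminf_mono) simp
  ultimately have "liminf F \<le> ennreal d * ennreal m + A"
    by simp
  also have "\<dots> \<le> A + ennreal e"
    using \<open>d * m \<le> e\<close> \<open>d > 0\<close> \<open>m \<ge> 0\<close> by (simp add: ennreal_mult[symmetric] add.commute ennreal_leI)
  finally show "liminf F \<le> A + ennreal e" .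
qed

lemma liminf_finite_subseq:
  fixes f :: "nat \<Rightarrow> ennreal"
  assumes "liminf f < top"
  obtains \<tau> where "strict_mono \<tau>" "(f \<circ> \<tau>) \<longlonglongrightarrow> liminf f" "\<And>j. f (\<tau> j) < top"
proof -
  obtain \<sigma> where \<sigma>: "strict_mono \<sigma>" "(f \<circ> \<sigma>) \<longlonglongrightarrow> liminf f"
    using liminf_subseq_lim by blast
  then obtain N where N: "\<And>j. j \<ge> N \<Longrightarrow> f (\<sigma> j) < top"
    using order_tendstoD(2)[OF \<sigma>(2) assms] by (auto simp: eventually_sequentially)
  show ?thesis
  proof
    show "strict_mono (\<lambda>j. \<sigma> (j + N))"
      using \<sigma>(1) by (simp add: strict_mono_def)
    show "(f \<circ> (\<lambda>j. \<sigma> (j + N))) \<longlonglongrightarrow> liminf f"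
      using LIMSEQ_ignore_initial_segment[OF \<sigma>(2), of N] by (simp add: o_def)
  qed (simp add: N)
qed

lemma phi_pow_embedding_if_Phi_w:
  assumes "Phi_w \<Omega> \<phi>" "bounded \<Omega>" "open \<Omega>"
  obtains L where "phi_pow_embedding \<Omega> \<phi> (measure lebesgue \<Omega>) L"
proof -
  have "\<Omega> \<in> lmeasurable" using assms(2,3) by (rule lmeasurable_open)
  then have sets_\<Omega>: "\<Omega> \<in> sets lebesgue" and "emeasure lebesgue \<Omega> = measure lebesgue \<Omega>"
    by (auto simp: emeasure_eq_measure2)
  obtain L where "L \<ge> 1" and AE_\<Omega>: "AE x in lebesgue_on \<Omega>.
          mono_on {0..} (\<phi> x) \<and> \<phi> x 0 = 0 \<and> ((\<phi> x) \<longlongrightarrow> 0) (at_right 0) \<and>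
          ((\<phi> x) \<longlongrightarrow> top) at_top \<and>
          (\<forall>s t. 0 < s \<and> s \<le> t \<longrightarrow> \<phi> x s / ennreal s \<le> ennreal L * (\<phi> x t / ennreal t))"
    using assms(1) unfolding Phi_w_def by blast
  have "AE x in lebesgue. x \<in> \<Omega> \<longrightarrow> mono_on {0..} (\<phi> x) \<and> \<phi> x 0 = 0 \<and>
          ((\<phi> x) \<longlongrightarrow> 0) (at_right 0) \<and> ((\<phi> x) \<longlongrightarrow> top) at_top \<and>
          (\<forall>s t. 0 < s \<and> s \<le> t \<longrightarrow> \<phi> x s / ennreal s \<le> ennreal L * (\<phi> x t / ennreal t))"
    using AE_\<Omega> sets_\<Omega> by (subst AE_restrict_space_iff[symmetric]) auto
  then have "AE x in lebesgue. x \<in> \<Omega> \<longrightarrow> \<phi> x 0 = 0 \<and>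
       (\<forall>s t. 0 < s \<and> s \<le> t \<longrightarrow> \<phi> x s / ennreal s \<le> ennreal L * (\<phi> x t / ennreal t))"
    by (elim eventually_mono) blast
  with \<open>L \<ge> 1\<close> sets_\<Omega> \<open>emeasure lebesgue \<Omega> = measure lebesgue \<Omega>\<close> show ?thesis
    by (intro that, unfold_locales) auto
qed

lemma E_p_finite:
  assumes "E_p \<Omega> \<phi> u0 p u < top"
  shows "L1phi0 \<Omega> (phi_pow \<phi> p) (\<lambda>x. u x - u0 x)"
    and "E_p \<Omega> \<phi> u0 p u = (\<integral>\<^sup>+x\<in>\<Omega>. ennpow (\<phi> x (norm (grad \<Omega> u x))) p \<partial>lebesgue)"
  using assms unfolding E_p_def by (auto split: if_splits)

lemma E_1_le_liminf:
  assumes "\<And>i. L1phi0 \<Omega> \<phi> (\<lambda>x. v i x - u0 x)" "L1_conv \<Omega> v u"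
  shows "E_1 \<Omega> \<phi> u0 u \<le> liminf (\<lambda>i. \<integral>\<^sup>+x\<in>\<Omega>. \<phi> x (norm (grad \<Omega> (v i) x)) \<partial>lebesgue)"
  unfolding E_1_def using assms by (intro Inf_lower) blast

lemma L1_conv_subseq:
  assumes "L1_conv \<Omega> v u" "strict_mono \<tau>"
  shows "L1_conv \<Omega> (v \<circ> \<tau>) u"
  using assms LIMSEQ_subseq_LIMSEQ[of "\<lambda>i. L1_norm \<Omega> (\<lambda>x. v i x - u x)" 0 \<tau>]
  unfolding L1_conv_def by (auto simp: o_def)

theorem mainTheorem7:
  fixes \<Omega> :: "(real^'n) set" and \<phi> :: "real^'n \<Rightarrow> real \<Rightarrow> ennreal"
    and r :: real and u0 u :: "real^'n \<Rightarrow> real"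
    and us :: "nat \<Rightarrow> real^'n \<Rightarrow> real" and p :: "nat \<Rightarrow> real"
  assumes "open \<Omega>" "connected \<Omega>" "bounded \<Omega>" "\<Omega> \<noteq> {}"
    and "Phi_w \<Omega> \<phi>"
    and "r > 1"
    and "L1phi \<Omega> (phi_pow \<phi> r) u0"
    and "integrable (lebesgue_on \<Omega>) u"
    and "L1_conv \<Omega> us u"
    and "\<And>i. p i \<in> {1<..<r}"
    and "p \<longlonglongrightarrow> 1"
  shows "E_1 \<Omega> \<phi> u0 u \<le> liminf (\<lambda>i. E_p \<Omega> \<phi> u0 (p i) (us i))"
proof -
  define Ep where "Ep i = E_p \<Omega> \<phi> u0 (p i) (us i)" for i
  obtain L where embedding: "phi_pow_embedding \<Omega> \<phi> (measure lebesgue \<Omega>) L"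
    using phi_pow_embedding_if_Phi_w \<open>Phi_w \<Omega> \<phi>\<close> \<open>bounded \<Omega>\<close> \<open>open \<Omega>\<close> by blast
  have p_ge_1: "p i \<ge> 1" for i using assms(10)[of i] by simp
  show ?thesis
  proof (cases "liminf Ep < top")
    case True
    then obtain \<tau> where \<tau>: "strict_mono \<tau>" "(Ep \<circ> \<tau>) \<longlonglongrightarrow> liminf Ep" "\<And>j. Ep (\<tau> j) < top"
      using liminf_finite_subseq by blast
    have "L1phi0 \<Omega> \<phi> (\<lambda>x. us (\<tau> j) x - u0 x)" for j
      using \<tau>(3)[of j] unfolding Ep_def
      by (intro phi_pow_embedding.L1phi0_if_phi_pow[OF embedding p_ge_1 E_p_finite(1)])
    then have "E_1 \<Omega> \<phi> u0 u \<le> liminf (\<lambda>j. \<integral>\<^sup>+x\<in>\<Omega>. \<phi> x (norm (grad \<Omega> (us (\<tau> j)) x)) \<partial>lebesgue)"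
      using E_1_le_liminf[of _ _ "us \<circ> \<tau>", OF _ L1_conv_subseq[OF \<open>L1_conv \<Omega> us u\<close> \<tau>(1)]]
      by (simp add: o_def)
    also have "\<dots> \<le> liminf Ep"
    proof (rule liminf_le_if_le_add_powr[where E = "Ep \<circ> \<tau>" and q = "p \<circ> \<tau>"])
      fix d :: real and j assume "d > 0"
      show "(\<integral>\<^sup>+x\<in>\<Omega>. \<phi> x (norm (grad \<Omega> (us (\<tau> j)) x)) \<partial>lebesgue) \<le>
          ennreal d * ennreal (measure lebesgue \<Omega>) + ennreal (d powr (1 - (p \<circ> \<tau>) j)) * (Ep \<circ> \<tau>) j"
        unfolding o_def Ep_def E_p_finite(2)[OF \<tau>(3)[of j, unfolded Ep_def]]
        using phi_pow_embedding.sets_\<Omega>[OF embedding] phi_pow_embedding.emeasure_\<Omega>[OF embedding]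
        by (rule set_nn_integral_le_add_ennpow[OF _ _ \<open>d > 0\<close> p_ge_1])
    qed (use \<tau>(2) LIMSEQ_subseq_LIMSEQ[OF \<open>p \<longlonglongrightarrow> 1\<close> \<tau>(1)] in auto)
    finally show ?thesis unfolding Ep_def .
  qed (simp add: Ep_def[abs_def] less_top[symmetric])
qed

end
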